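(* Let $M=\{D(c_1;r_1),D(c_2;r_2),D(c_3;r_3)\}$ be a 2-disk system whose centers $c_1,c_2,c_3$ lie on a common line, with Vietoris–Rips scale $\nu_M>0$. Then $\mu_M=\nu_M$; equivalently (for pairwise distinct disks) $\rho_M(\nu_M)\ge0$.
   Context: A 2-disk system is a finite collection of closed disks $D(c_i;r_i)\subset\mathbb R^2$ with $r_i>0$. $\nu_M=\max_{i<j}\|c_i-c_j\|/(r_i+r_j)$ (Vietoris–Rips scale) and $\mu_M=\inf\{\lambda\ge0:\bigcap_i D(c_i;\lambda r_i)\ne\emptyset\}$ (Čech scale). Definition of $d_{ij}$ for two intersecting disks $D_i,D_j$ ($i\ne j$): write $c_j-c_i=(a,b)$, $\mathbf n_{ij}=(-b,a)$; if the boundary circles meet, $d_{ij}$ is the unique common boundary point with $\langle d_{ij}-c_i,\mathbf n_{ij}\rangle\ge0$; otherwise, with $\lambda_0=\|c_i-c_j\|/|r_i-r_j|$, $d_{ij}$ is the unique point of $\partial D(c_i;\lambda_0r_i)\cap\partial D(c_j;\lambda_0r_j)$ (equal to $c_i$ if $c_i=c_j$). $d_{ij}(\lambda)$ is this point for the disks rescaled by $\lambda$, and $\rho_M(\lambda)=\max_{i\ne j}\min_{k\notin\{i,j\}}(\lambda r_k-\|d_{ij}(\lambda)-c_k\|)$ for $\lambda\ge\nu_M$. *)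

theory Defs
  imports "HOL-Analysis.Analysis"
begin

text \<open>A disk system indexed by a finite set I of natural numbers: disk i is
  the closed disk cball (c i) (r i) in the plane real^2.\<close>

definition vr_scale :: "(nat \<Rightarrow> real^2) \<Rightarrow> (nat \<Rightarrow> real) \<Rightarrow> nat set \<Rightarrow> real" where
  "vr_scale c r I = Max {dist (c i) (c j) / (r i + r j) | i j. i \<in> I \<and> j \<in> I \<and> i < j}"

definition cech_scale :: "(nat \<Rightarrow> real^2) \<Rightarrow> (nat \<Rightarrow> real) \<Rightarrow> nat set \<Rightarrow> real" where
  "cech_scale c r I = Inf {t. t \<ge> 0 \<and> (\<Inter>i\<in>I. cball (c i) (t * r i)) \<noteq> {}}"

end

theory Submission
  imports Defs
begin

text \<open>A point common to all disks \<open>D(c\<^sub>i; t r\<^sub>i)\<close> makes every pair of them meet, so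
  \<open>\<nu>\<^sub>M \<le> \<mu>\<^sub>M\<close> always. Conversely, if the centres are collinear, restricting to the line
  turns the disks \<open>D(c\<^sub>i; \<nu>\<^sub>M r\<^sub>i)\<close> into pairwise intersecting intervals, and by Helly's
  theorem in dimension one the largest left endpoint lies in all of them.\<close>

lemma pairwise_intersecting_intervals_common_point:
  fixes x s :: "'i \<Rightarrow> real"
  assumes "finite I" "I \<noteq> {}"
    and pairwise: "\<And>i j. i \<in> I \<Longrightarrow> j \<in> I \<Longrightarrow> \<bar>x i - x j\<bar> \<le> s i + s j"
  shows "\<exists>y. \<forall>k\<in>I. \<bar>x k - y\<bar> \<le> s k"
proof
  define y where "y = Max ((\<lambda>k. x k - s k) ` I)"
  show "\<forall>k\<in>I. \<bar>x k - y\<bar> \<le> s k"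
  proof
    fix k assume k: "k \<in> I"
    have "x k - s k \<le> y"
      unfolding y_def using assms(1) k by (intro Max_ge) auto
    moreover have "y \<in> (\<lambda>k. x k - s k) ` I"
      unfolding y_def using assms(1,2) by (intro Max_in) auto
    then obtain j where j: "j \<in> I" and "y = x j - s j" by blast
    then have "y \<le> x k + s k"
      using pairwise[OF j k] by linarith
    ultimately show "\<bar>x k - y\<bar> \<le> s k" by linarith
  qed
qed

lemma collinear_pairwise_intersecting_cballs:
  fixes c :: "'i \<Rightarrow> 'a::real_normed_vector"
  assumes "finite I" "I \<noteq> {}" "collinear (c ` I)"
    and pairwise: "\<And>i j. i \<in> I \<Longrightarrow> j \<in> I \<Longrightarrow> dist (c i) (c j) \<le> s i + s j"
  shows "(\<Inter>i\<in>I. cball (c i) (s i)) \<noteq> {}"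
proof -
  obtain u v where "\<forall>k\<in>I. \<exists>a. c k = u + a *\<^sub>R v"
    using \<open>collinear (c ` I)\<close> unfolding collinear_alt by auto
  then obtain a where a: "\<And>k. k \<in> I \<Longrightarrow> c k = u + a k *\<^sub>R v" by metis
  define n where "n = norm v"
  have dist_a: "dist (c j) (c k) = \<bar>a j * n - a k * n\<bar>" if "j \<in> I" "k \<in> I" for j k
  proof -
    have "c j - c k = (a j - a k) *\<^sub>R v" using a[OF that(1)] a[OF that(2)]
      by (simp add: algebra_simps)
    then have "dist (c j) (c k) = \<bar>a j - a k\<bar> * n" by (simp add: dist_norm n_def)
    also have "\<dots> = \<bar>a j * n - a k * n\<bar>"
      by (simp add: n_def abs_mult flip: left_diff_distrib)
    finally show ?thesis .
  qed
  obtain y where y: "\<And>k. k \<in> I \<Longrightarrow> \<bar>a k * n - y\<bar> \<le> s k"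
    using pairwise_intersecting_intervals_common_point[of I "\<lambda>k. a k * n" s] assms(1,2)
      pairwise dist_a by metis
  define p where "p = u + (y / n) *\<^sub>R v"
  have "dist (c k) p \<le> s k" if k: "k \<in> I" for k
  proof (cases "n = 0")
    case True
    then show ?thesis using a[OF k] pairwise[OF k k] by (simp add: p_def n_def)
  next
    case False
    have "dist (c k) p = \<bar>a k - y / n\<bar> * n"
      by (simp add: a[OF k] p_def dist_norm n_def flip: scaleR_diff_left)
    also have "\<dots> = \<bar>(a k - y / n) * n\<bar>" by (simp add: n_def abs_mult)
    also have "\<dots> = \<bar>a k * n - y\<bar>" using False by (simp add: left_diff_distrib)
    finally show ?thesis using y[OF k] by simp
  qed
  then have "p \<in> (\<Inter>i\<in>I. cball (c i) (s i))" by (intro INT_I) (simp add: mem_cball)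
  then show ?thesis by blast
qed

lemma finite_vr_ratios:
  assumes "finite I"
  shows "finite {dist (c i) (c j) / (r i + r j) | i j. i \<in> I \<and> j \<in> I \<and> i < j}"
  by (rule finite_subset[of _ "(\<lambda>(i, j). dist (c i) (c j) / (r i + r j)) ` (I \<times> I)"])
    (use assms in auto)

lemma vr_scale_bounds_pair:
  assumes "finite I" "i \<in> I" "j \<in> I" "i \<noteq> j" "r i > 0" "r j > 0"
  shows "dist (c i) (c j) \<le> vr_scale c r I * (r i + r j)"
proof -
  have finite_ratios: "finite {dist (c i) (c j) / (r i + r j) | i j. i \<in> I \<and> j \<in> I \<and> i < j}"
    using finite_vr_ratios[OF \<open>finite I\<close>] .
  have "dist (c i) (c j) / (r i + r j) \<le> vr_scale c r I"
  proof (cases "i < j")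
    case True
    then show ?thesis unfolding vr_scale_def using assms(2,3) finite_ratios
      by (intro Max_ge) auto
  next
    case False
    then have "j < i" using \<open>i \<noteq> j\<close> by simp
    then have "dist (c j) (c i) / (r j + r i) \<le> vr_scale c r I"
      unfolding vr_scale_def using assms(2,3) finite_ratios by (intro Max_ge) auto
    then show ?thesis by (simp add: dist_commute add.commute)
  qed
  then show ?thesis using assms(5,6) by (simp add: pos_divide_le_eq)
qed

lemma vr_scale_le_if_common_point:
  assumes "finite I" "i\<^sub>0 \<in> I" "j\<^sub>0 \<in> I" "i\<^sub>0 < j\<^sub>0" "\<And>i. i \<in> I \<Longrightarrow> r i > 0"
    and q: "q \<in> (\<Inter>i\<in>I. cball (c i) (t * r i))"
  shows "vr_scale c r I \<le> t"
  unfolding vr_scale_def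
proof (subst Max_le_iff)
  show "finite {dist (c i) (c j) / (r i + r j) | i j. i \<in> I \<and> j \<in> I \<and> i < j}"
    using finite_vr_ratios[OF \<open>finite I\<close>] .
  show "{dist (c i) (c j) / (r i + r j) | i j. i \<in> I \<and> j \<in> I \<and> i < j} \<noteq> {}"
    using assms(2-4) by blast
  have "dist (c i) (c j) / (r i + r j) \<le> t" if "i \<in> I" "j \<in> I" for i j
  proof -
    have "dist (c i) (c j) \<le> dist (c i) q + dist (c j) q"
      using dist_triangle[of "c i" "c j" q] by (simp add: dist_commute)
    also have "\<dots> \<le> t * (r i + r j)"
      using q that by (simp add: distrib_left add_mono)
    finally show ?thesis using assms(5)[OF that(1)] assms(5)[OF that(2)]
      by (simp add: pos_divide_le_eq)
  qed
  then show "\<forall>x\<in>{dist (c i) (c j) / (r i + r j) | i j. i \<in> I \<and> j \<in> I \<and> i < j}. x \<le> t"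
    by blast
qed

lemma cech_scale_eq_vr_scale_if_collinear:
  assumes "finite I" "i\<^sub>0 \<in> I" "j\<^sub>0 \<in> I" "i\<^sub>0 < j\<^sub>0" "\<And>i. i \<in> I \<Longrightarrow> r i > 0"
    and "collinear (c ` I)"
  shows "cech_scale c r I = vr_scale c r I"
  unfolding cech_scale_def
proof (rule cInf_eq_minimum)
  let ?\<nu> = "vr_scale c r I"
  have "dist (c i\<^sub>0) (c j\<^sub>0) \<le> ?\<nu> * (r i\<^sub>0 + r j\<^sub>0)"
    using assms(1-5) by (intro vr_scale_bounds_pair) auto
  then have "0 \<le> ?\<nu> * (r i\<^sub>0 + r j\<^sub>0)"
    by (rule order_trans[OF zero_le_dist])
  moreover have "0 < r i\<^sub>0 + r j\<^sub>0" using assms(2,3,5) by (simp add: add_pos_pos)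
  ultimately have "0 \<le> ?\<nu>" using zero_le_mult_iff[of ?\<nu> "r i\<^sub>0 + r j\<^sub>0"] by linarith
  moreover have "dist (c i) (c j) \<le> ?\<nu> * r i + ?\<nu> * r j" if "i \<in> I" "j \<in> I" for i j
  proof (cases "i = j")
    case True
    then show ?thesis using \<open>0 \<le> ?\<nu>\<close> assms(5)[OF that(1)] by simp
  next
    case False
    then show ?thesis using vr_scale_bounds_pair[OF assms(1) that False] assms(5) that
      by (simp add: distrib_left)
  qed
  then have "(\<Inter>i\<in>I. cball (c i) (?\<nu> * r i)) \<noteq> {}"
    using assms(1,2,6) by (intro collinear_pairwise_intersecting_cballs) auto
  ultimately show "?\<nu> \<in> {t. 0 \<le> t \<and> (\<Inter>i\<in>I. cball (c i) (t * r i)) \<noteq> {}}" by simp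
  show "?\<nu> \<le> t" if "t \<in> {t. 0 \<le> t \<and> (\<Inter>i\<in>I. cball (c i) (t * r i)) \<noteq> {}}" for t
  proof -
    from that obtain q where "q \<in> (\<Inter>i\<in>I. cball (c i) (t * r i))" by blast
    from vr_scale_le_if_common_point[OF assms(1-4) _ this] assms(5) show ?thesis by blast
  qed
qed

theorem mainTheorem8:
  fixes c :: "nat \<Rightarrow> real^2" and r :: "nat \<Rightarrow> real"
  assumes "\<forall>i\<in>{1,2,3}. r i > 0"
    and "collinear {c 1, c 2, c 3}"
    and "vr_scale c r {1,2,3} > 0"
  shows "cech_scale c r {1,2,3} = vr_scale c r {1,2,3}"
  using assms(1,2) by (intro cech_scale_eq_vr_scale_if_collinear[of _ 1 2]) auto

end
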